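(* Let $f$, $\bar f$ and the systems $(\Sigma_\alpha)$: $\dot x=f(x,t,\alpha t)$, $(\Sigma^u_\alpha)$: $\dot x=f(x,t,\alpha t)+u$ ($x,u\in\mathbb{R}^n$), and $(\bar\Sigma)$: $\dot x=\bar f(x,t)$ be as below. Assume there exist $\delta\in\mathcal{K}$ such that $(\bar\Sigma)$ is UGAS and $\delta$-compatible, constants $\eta_o>0$, $K>1$ and $N\in\mathcal{M}$ such that $$\left|\int_{r-1/\eta}^{r+1/\eta}\{f(x,l,\eta^2 l)-\bar f(x,l)\}\,\mathrm{d}l\right|\le\delta(|x|/2)N(\eta)\quad\forall\eta\ge\eta_o,\ x\in\mathbb{R}^n,\ r\in\mathbb{R},$$ and $|\partial\bar f/\partial x(x,t)|\le K$, $|\partial f/\partial x(x,t,\alpha t)|\le K$, $|f(x,t,\alpha t)|\le\delta(|x|/2)$ for all $t\in\mathbb{R}$, $x\in\mathbb{R}^n$, $\alpha>0$. Let $V$ be a $C^1$ Lyapunov function for $(\bar\Sigma)$ which, together with some constants $\bar c\in(0,1)$, $\bar{\bar c}>0$, satisfies (P1)–(P3) of the definition of $\delta$-compatibility. Then there exists a constant $\underline\alpha>0$ such that for all constants $\alpha>\underline\alpha$, $$V^{[\alpha]}(\xi,t):=V\!\left(\xi-\frac{\sqrt\alpha}{2}\int_{t-2/\sqrt\alpha}^{t}\int_s^t\{f(\xi,l,\alpha l)-\bar f(\xi,l)\}\,\mathrm{d}l\,\mathrm{d}s,\ t\right)$$ is a Lyapunov function for $(\Sigma_\alpha)$ and an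 iISS Lyapunov function for $(\Sigma^u_\alpha)$. If also $\delta\in\mathcal{K}_\infty$, then $V^{[\alpha]}$ is also an ISS Lyapunov function for $(\Sigma^u_\alpha)$ for all constants $\alpha>\underline\alpha$.
   Context: Standing assumptions: $f:\mathbb{R}^n\times\mathbb{R}\times\mathbb{R}\to\mathbb{R}^n$ is continuous in time, $C^1$ in $x$, $f(0,t,\alpha t)=\bar f(0,t)=0$ for all $t$, $\alpha>0$; $\bar f$ is continuous and $C^1$ in $x$; all systems are forward complete; there is $\rho\in\mathcal{K}_\infty$ with $|f(x,t,\alpha t)|\le\rho(|x|)$. Function classes: positive definite (continuous $[0,\infty)\to[0,\infty)$, zero only at $0$); $\mathcal{K}$ (positive definite, strictly increasing); $\mathcal{K}_\infty$ ($\mathcal{K}$ and unbounded); $\mathcal{KL}$ as usual; $N\in\mathcal{M}$ iff $\lim_{\eta\to\infty}\eta N(\eta)=0$. A system $\dot x=F(x,t)$ is UGAS if there is $\beta\in\mathcal{KL}$ with $|\phi(t;t_o,x_o)|\le\beta(|x_o|,t-t_o)$ for all $t\ge t_o\ge0$. A Lyapunov function for $\dot x=F(x,t)$ is a $C^1$ function $V:\mathbb{R}^n\times[0,\infty)\to[0,\infty)$ with $\delta_1,\delta_2\in\mathcal{K}_\infty$, $\delta_3\in\mathcal{K}$ such that $\delta_1(|\xi|)\le V(\xi,t)\le\delta_2(|\xi|)$ and $V_t+V_\xi F(\xi,t)\le-\delta_3(|\xi|)$ for all $\xi$, $t\ge0$ (subscripts denote partial gradients). $\delta$-compatibility of $\dot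 x=\bar f(x,t)$ (for $\delta\in\mathcal{K}$): there are a $C^1$ Lyapunov function $V$ and constants $\bar c\in(0,1)$, $\bar{\bar c}>0$ with, for all $\xi,t$: (P1) $V_t+V_\xi\bar f(\xi,t)\le-\bar c\,\delta^2(|\xi|)$; (P2) $|V_\xi(\xi,t)|\le\delta(|\xi|)$ and $|\bar f(\xi,t)|\le\delta(|\xi|/2)$; (P3) $\delta(s)\le\bar{\bar c}s$ for $s\ge0$. A function $V:\mathbb{R}^n\times[0,\infty)\to[0,\infty)$ is uniformly proper and positive definite if there are $\delta_1,\delta_2\in\mathcal{K}_\infty$ with $\delta_1(|\xi|)\le V(\xi,t)\le\delta_2(|\xi|)$. For a control system $\dot x=F(x,t,u)$, a $C^1$ uniformly proper and positive definite $V$ is an ISS Lyapunov function if there are $\chi,\delta_3\in\mathcal{K}_\infty$ such that for all $t\ge0$, $\xi$, $u$: $|u|\le\chi(|\xi|)\Rightarrow V_t(\xi,t)+V_\xi(\xi,t)F(\xi,t,u)\le-\delta_3(|\xi|)$; it is an iISS Lyapunov function if there are $\Delta\in\mathcal{K}_\infty$ and a positive definite $\nu$ with $V_t(\xi,t)+V_\xi(\xi,t)F(\xi,t,u)\le-\nu(|\xi|)+\Delta(|u|)$ for all $t\ge0,\xi,u$. *)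

theory Defs
  imports "HOL-Analysis.Analysis"
begin

definition pos_def_fun :: "(real \<Rightarrow> real) \<Rightarrow> bool" where
  "pos_def_fun a \<longleftrightarrow> continuous_on {0..} a \<and> a 0 = 0 \<and> (\<forall>s>0. a s > 0)"

definition classK :: "(real \<Rightarrow> real) \<Rightarrow> bool" where
  "classK a \<longleftrightarrow> pos_def_fun a \<and> strict_mono_on {0..} a"

definition classKinf :: "(real \<Rightarrow> real) \<Rightarrow> bool" where
  "classKinf a \<longleftrightarrow> classK a \<and> (\<forall>M. \<exists>s\<ge>0. M < a s)"

definition classKL :: "(real \<Rightarrow> real \<Rightarrow> real) \<Rightarrow> bool" where
  "classKL b \<longleftrightarrow> continuous_on ({0..} \<times> {0..}) (\<lambda>p. b (fst p) (snd p))
     \<and> (\<forall>s\<ge>0. classK (\<lambda>r. b r s))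
     \<and> (\<forall>r\<ge>0. antimono_on {0..} (\<lambda>s. b r s) \<and> ((\<lambda>s. b r s) \<longlongrightarrow> 0) at_top)"

definition classM :: "(real \<Rightarrow> real) \<Rightarrow> bool" where
  "classM N \<longleftrightarrow> ((\<lambda>\<eta>. \<eta> * N \<eta>) \<longlongrightarrow> 0) at_top"

definition is_solution :: "('a::real_normed_vector \<Rightarrow> real \<Rightarrow> 'a) \<Rightarrow> real \<Rightarrow> 'a \<Rightarrow> (real \<Rightarrow> 'a) \<Rightarrow> bool" where
  "is_solution F t0 x0 \<phi> \<longleftrightarrow> \<phi> t0 = x0 \<and>
     (\<forall>t\<ge>t0. (\<phi> has_vector_derivative F (\<phi> t) t) (at t within {t0..}))"

definition forward_complete :: "('a::real_normed_vector \<Rightarrow> real \<Rightarrow> 'a) \<Rightarrow> bool" where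
  "forward_complete F \<longleftrightarrow> (\<forall>t0\<ge>0. \<forall>x0. \<exists>\<phi>. is_solution F t0 x0 \<phi>)"

definition UGAS :: "('a::real_normed_vector \<Rightarrow> real \<Rightarrow> 'a) \<Rightarrow> bool" where
  "UGAS F \<longleftrightarrow> (\<exists>\<beta>. classKL \<beta> \<and>
     (\<forall>t0 x0 \<phi> t. t0 \<ge> 0 \<longrightarrow> is_solution F t0 x0 \<phi> \<longrightarrow> t \<ge> t0 \<longrightarrow>
        norm (\<phi> t) \<le> \<beta> (norm x0) (t - t0)))"

definition C1_tv :: "('a::euclidean_space \<Rightarrow> real \<Rightarrow> real) \<Rightarrow> ('a \<Rightarrow> real \<Rightarrow> 'a) \<Rightarrow> ('a \<Rightarrow> real \<Rightarrow> real) \<Rightarrow> bool" where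
  "C1_tv W Wx Wt \<longleftrightarrow>
     (\<forall>\<xi> t. t \<ge> 0 \<longrightarrow>
        ((\<lambda>p. W (fst p) (snd p)) has_derivative (\<lambda>h. Wx \<xi> t \<bullet> fst h + Wt \<xi> t * snd h))
          (at (\<xi>, t) within (UNIV \<times> {0..})))
     \<and> continuous_on (UNIV \<times> {0..}) (\<lambda>p. Wx (fst p) (snd p))
     \<and> continuous_on (UNIV \<times> {0..}) (\<lambda>p. Wt (fst p) (snd p))"

definition unif_proper_pd :: "('a::real_normed_vector \<Rightarrow> real \<Rightarrow> real) \<Rightarrow> bool" where
  "unif_proper_pd W \<longleftrightarrow> (\<exists>d1 d2. classKinf d1 \<and> classKinf d2 \<and>
     (\<forall>\<xi> t. t \<ge> 0 \<longrightarrow> d1 (norm \<xi>) \<le> W \<xi> t \<and> W \<xi> t \<le> d2 (norm \<xi>)))"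

definition lyap_with :: "('a::euclidean_space \<Rightarrow> real \<Rightarrow> 'a) \<Rightarrow> ('a \<Rightarrow> real \<Rightarrow> real)
    \<Rightarrow> ('a \<Rightarrow> real \<Rightarrow> 'a) \<Rightarrow> ('a \<Rightarrow> real \<Rightarrow> real) \<Rightarrow> bool" where
  "lyap_with F W Wx Wt \<longleftrightarrow> C1_tv W Wx Wt \<and>
     (\<exists>d1 d2 d3. classKinf d1 \<and> classKinf d2 \<and> classK d3 \<and>
       (\<forall>\<xi> t. t \<ge> 0 \<longrightarrow> d1 (norm \<xi>) \<le> W \<xi> t \<and> W \<xi> t \<le> d2 (norm \<xi>)
          \<and> Wt \<xi> t + Wx \<xi> t \<bullet> F \<xi> t \<le> - d3 (norm \<xi>)))"

definition lyapunov_fun :: "('a::euclidean_space \<Rightarrow> real \<Rightarrow> 'a) \<Rightarrow> ('a \<Rightarrow> real \<Rightarrow> real) \<Rightarrow> bool" where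
  "lyapunov_fun F W \<longleftrightarrow> (\<exists>Wx Wt. lyap_with F W Wx Wt)"

definition ISS_lyapunov_fun :: "('a::euclidean_space \<Rightarrow> real \<Rightarrow> 'a \<Rightarrow> 'a) \<Rightarrow> ('a \<Rightarrow> real \<Rightarrow> real) \<Rightarrow> bool" where
  "ISS_lyapunov_fun F W \<longleftrightarrow> (\<exists>Wx Wt chi d3. C1_tv W Wx Wt \<and> unif_proper_pd W \<and>
     classKinf chi \<and> classKinf d3 \<and>
     (\<forall>t \<xi> u. t \<ge> 0 \<longrightarrow> norm u \<le> chi (norm \<xi>) \<longrightarrow>
        Wt \<xi> t + Wx \<xi> t \<bullet> F \<xi> t u \<le> - d3 (norm \<xi>)))"

definition iISS_lyapunov_fun :: "('a::euclidean_space \<Rightarrow> real \<Rightarrow> 'a \<Rightarrow> 'a) \<Rightarrow> ('a \<Rightarrow> real \<Rightarrow> real) \<Rightarrow> bool" where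
  "iISS_lyapunov_fun F W \<longleftrightarrow> (\<exists>Wx Wt \<Delta> \<nu>. C1_tv W Wx Wt \<and> unif_proper_pd W \<and>
     classKinf \<Delta> \<and> pos_def_fun \<nu> \<and>
     (\<forall>t \<xi> u. t \<ge> 0 \<longrightarrow> Wt \<xi> t + Wx \<xi> t \<bullet> F \<xi> t u \<le> - \<nu> (norm \<xi>) + \<Delta> (norm u)))"

definition compat_witness :: "('a::euclidean_space \<Rightarrow> real \<Rightarrow> 'a) \<Rightarrow> (real \<Rightarrow> real)
   \<Rightarrow> ('a \<Rightarrow> real \<Rightarrow> real) \<Rightarrow> ('a \<Rightarrow> real \<Rightarrow> 'a) \<Rightarrow> ('a \<Rightarrow> real \<Rightarrow> real) \<Rightarrow> real \<Rightarrow> real \<Rightarrow> bool" where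
  "compat_witness fb \<delta> V Vx Vt c1 c2 \<longleftrightarrow>
     lyap_with fb V Vx Vt \<and> 0 < c1 \<and> c1 < 1 \<and> 0 < c2 \<and>
     (\<forall>\<xi> t. t \<ge> 0 \<longrightarrow> Vt \<xi> t + Vx \<xi> t \<bullet> fb \<xi> t \<le> - c1 * (\<delta> (norm \<xi>))\<^sup>2) \<and>
     (\<forall>\<xi> t. t \<ge> 0 \<longrightarrow> norm (Vx \<xi> t) \<le> \<delta> (norm \<xi>) \<and> norm (fb \<xi> t) \<le> \<delta> (norm \<xi> / 2)) \<and>
     (\<forall>s\<ge>0. \<delta> s \<le> c2 * s)"

definition delta_compatible :: "('a::euclidean_space \<Rightarrow> real \<Rightarrow> 'a) \<Rightarrow> (real \<Rightarrow> real) \<Rightarrow> bool" where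
  "delta_compatible fb \<delta> \<longleftrightarrow> (\<exists>V Vx Vt c1 c2. compat_witness fb \<delta> V Vx Vt c1 c2)"

definition V_alpha :: "('a::euclidean_space \<Rightarrow> real \<Rightarrow> real) \<Rightarrow> ('a \<Rightarrow> real \<Rightarrow> real \<Rightarrow> 'a)
   \<Rightarrow> ('a \<Rightarrow> real \<Rightarrow> 'a) \<Rightarrow> real \<Rightarrow> 'a \<Rightarrow> real \<Rightarrow> real" where
  "V_alpha V f fb \<alpha> \<xi> t =
     V (\<xi> - (sqrt \<alpha> / 2) *\<^sub>R
          integral {t - 2 / sqrt \<alpha> .. t} (\<lambda>s. integral {s..t} (\<lambda>l. f \<xi> l (\<alpha> * l) - fb \<xi> l))) t"

end

theory Submission
  imports Defs
begin

text \<open>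
  Write \<open>g \<xi> l = f \<xi> l (\<alpha> * l) - fb \<xi> l\<close>, \<open>T = 2 / sqrt \<alpha>\<close>, and let \<open>w \<xi> t\<close> be the double integral
  in \<open>V_alpha\<close>, so that \<open>V_alpha \<xi> t = V (\<xi> - w \<xi> t) t\<close>. Differentiating in \<open>t\<close> gives
  \<open>g \<xi> t\<close> minus \<open>sqrt \<alpha> / 2\<close> times the integral of \<open>g \<xi>\<close> over \<open>[t - T, t]\<close>: along the fast system the
  oscillating part \<open>g\<close> of the vector field cancels, and what is left is a window average, which the
  averaging hypothesis makes of size \<open>\<delta> (norm \<xi> / 2) * sqrt \<alpha> * N (sqrt \<alpha>)\<close>. Moreover \<open>w\<close> and its
  derivative in \<open>\<xi>\<close> are \<open>O (1 / sqrt \<alpha>)\<close>. So the derivative of \<open>V_alpha\<close> along \<open>f + u\<close> is the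
  derivative of \<open>V\<close> along \<open>fb\<close> at \<open>z = \<xi> - w \<xi> t\<close>, at most \<open>- c1 * \<delta> (norm z)\<^sup>2\<close> by (P1), plus errors
  which for large \<open>\<alpha>\<close> are at most \<open>c1 / 2 * \<delta> (norm z)\<^sup>2 + 2 * \<delta> (norm z) * norm u\<close>. Since \<open>norm z\<close> lies
  between \<open>norm \<xi> / 2\<close> and \<open>3 / 2 * norm \<xi>\<close>, the bounds on \<open>V\<close> transfer to \<open>V_alpha\<close>, and the
  Lyapunov, iISS and ISS estimates follow by completing squares.
\<close>

section \<open>Comparison functions\<close>

lemma classK_nonneg: "classK d \<Longrightarrow> 0 \<le> s \<Longrightarrow> 0 \<le> d s"
  unfolding classK_def pos_def_fun_def by (metis less_eq_real_def)

lemma classK_mono: "classK d \<Longrightarrow> 0 \<le> s \<Longrightarrow> s \<le> s' \<Longrightarrow> d s \<le> d s'"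
  unfolding classK_def strict_mono_on_def by (metis atLeast_iff less_eq_real_def order_trans)

lemma classK_compose_scale:
  assumes d: "classK d" and r: "0 < r"
  shows "classK (\<lambda>s. d (r * s))"
proof -
  have c: "continuous_on {0..} d" and sm: "strict_mono_on {0..} d"
    and d0: "d 0 = 0" and dp: "\<And>s. 0 < s \<Longrightarrow> 0 < d s"
    using d unfolding classK_def pos_def_fun_def by auto
  have "continuous_on {0..} (\<lambda>s. d (r * s))"
    using r by (intro continuous_on_compose2[OF c]) (auto intro!: continuous_intros)
  moreover have "strict_mono_on {0..} (\<lambda>s. d (r * s))"
    using sm r unfolding strict_mono_on_def by simp
  ultimately show ?thesis
    unfolding classK_def pos_def_fun_def using d0 dp r by simp
qed

lemma classKinf_compose_scale:
  assumes d: "classKinf d" and r: "0 < r"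
  shows "classKinf (\<lambda>s. d (r * s))"
proof -
  have "\<exists>s\<ge>0. M < d (r * s)" for M
  proof -
    obtain s where "0 \<le> s" "M < d s" using d unfolding classKinf_def by blast
    then show ?thesis using r by (intro exI[of _ "s / r"]) auto
  qed
  then show ?thesis using classK_compose_scale[OF _ r] d unfolding classKinf_def by blast
qed

lemma classK_power2:
  assumes d: "classK d"
  shows "classK (\<lambda>s. (d s)\<^sup>2)"
proof -
  have c: "continuous_on {0..} d" and sm: "strict_mono_on {0..} d"
    and d0: "d 0 = 0" and dp: "\<And>s. 0 < s \<Longrightarrow> 0 < d s"
    using d unfolding classK_def pos_def_fun_def by auto
  have "strict_mono_on {0..} (\<lambda>s. (d s)\<^sup>2)"
    unfolding strict_mono_on_def
  proof (intro allI impI)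
    fix s t :: real assume st: "s \<in> {0..} \<and> t \<in> {0..} \<and> s < t"
    then have "d s < d t" using sm unfolding strict_mono_on_def by blast
    moreover have "0 \<le> d s" using classK_nonneg[OF d] st by simp
    ultimately show "(d s)\<^sup>2 < (d t)\<^sup>2" by (intro power_strict_mono) auto
  qed
  then show ?thesis
    unfolding classK_def pos_def_fun_def using c d0 dp
    by (auto intro!: continuous_intros) (metis less_irrefl)
qed

lemma classKinf_power2:
  assumes d: "classKinf d"
  shows "classKinf (\<lambda>s. (d s)\<^sup>2)"
proof -
  have "\<exists>s\<ge>0. M < (d s)\<^sup>2" for M
  proof -
    obtain s where s: "0 \<le> s" "max M 1 < d s" using d unfolding classKinf_def by blast
    then have "d s \<le> (d s)\<^sup>2" by (simp add: power2_eq_square)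
    then show ?thesis using s by (intro exI[of _ s]) auto
  qed
  then show ?thesis using classK_power2 d unfolding classKinf_def by blast
qed

lemma classK_cmult:
  assumes d: "classK d" and k: "0 < k"
  shows "classK (\<lambda>s. k * d s)"
proof -
  have c: "continuous_on {0..} d" and sm: "strict_mono_on {0..} d"
    and d0: "d 0 = 0" and dp: "\<And>s. 0 < s \<Longrightarrow> 0 < d s"
    using d unfolding classK_def pos_def_fun_def by auto
  have "strict_mono_on {0..} (\<lambda>s. k * d s)"
    using sm k unfolding strict_mono_on_def by simp
  then show ?thesis
    unfolding classK_def pos_def_fun_def using c d0 dp k by (auto intro!: continuous_intros)
qed

lemma classKinf_cmult:
  assumes d: "classKinf d" and k: "0 < k"
  shows "classKinf (\<lambda>s. k * d s)"
proof -
  have "\<exists>s\<ge>0. M < k * d s" for M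
  proof -
    obtain s where "0 \<le> s" "M / k < d s" using d unfolding classKinf_def by blast
    then show ?thesis using k by (intro exI[of _ s]) (auto simp: field_simps)
  qed
  then show ?thesis using classK_cmult[OF _ k] d unfolding classKinf_def by blast
qed

lemma classKinf_id: "classKinf (\<lambda>s. s)"
proof -
  have "\<exists>s\<ge>0. M < s" for M :: real by (intro exI[of _ "\<bar>M\<bar> + 1"]) auto
  moreover have "classK (\<lambda>s. s)"
    unfolding classK_def pos_def_fun_def strict_mono_on_def by (auto intro!: continuous_intros)
  ultimately show ?thesis unfolding classKinf_def by blast
qed

section \<open>Integrals depending on a parameter\<close>

lemma continuous_on_slice:
  assumes "continuous_on (UNIV \<times> S) (\<lambda>p. k (fst p) (snd p))" and "A \<subseteq> S"
  shows "continuous_on A (k x)"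
  using assms by (intro continuous_on_compose2[OF assms(1), of A "\<lambda>l. (x, l)", simplified])
    (auto intro!: continuous_intros)

lemma continuous_on_uncurry_of_lipschitz:
  fixes k :: "'a::metric_space \<Rightarrow> real \<Rightarrow> 'b::real_normed_vector"
  assumes lip: "\<And>x y l. norm (k x l - k y l) \<le> L * dist x y" and L: "0 \<le> L"
    and cont: "\<And>x. continuous_on UNIV (k x)"
  shows "continuous_on UNIV (\<lambda>p. k (fst p) (snd p))"
  unfolding continuous_on_iff
proof (intro ballI allI impI)
  fix p0 :: "'a \<times> real" and e :: real
  assume e: "0 < e"
  obtain x0 l0 where p0: "p0 = (x0, l0)" by (cases p0)
  obtain d1 where d1: "0 < d1" "\<And>l. dist l l0 < d1 \<Longrightarrow> dist (k x0 l) (k x0 l0) < e / 2"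
    using cont[of x0] e unfolding continuous_on_iff by (metis UNIV_I half_gt_zero)
  define d where "d = min d1 (e / (2 * (L + 1)))"
  have d: "0 < d" using d1 e L by (simp add: d_def)
  show "\<exists>d>0. \<forall>p\<in>UNIV. dist p p0 < d \<longrightarrow> dist (k (fst p) (snd p)) (k (fst p0) (snd p0)) < e"
  proof (intro exI[of _ d] conjI ballI impI d)
    fix p :: "'a \<times> real" assume p_near: "dist p p0 < d"
    obtain x l where p: "p = (x, l)" by (cases p)
    have dx: "dist x x0 < d" and dl: "dist l l0 < d"
      using p_near dist_fst_le[of p p0] dist_snd_le[of p p0] p p0 by auto
    have "norm (k x l - k x0 l) \<le> L * dist x x0" by (rule lip)
    also have "\<dots> \<le> L * (e / (2 * (L + 1)))"
      using dx L by (intro mult_left_mono) (auto simp: d_def)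
    also have "\<dots> < e / 2"
      using L e by (simp add: field_simps)
    finally have "dist (k x l) (k x0 l) < e / 2" by (simp add: dist_norm)
    moreover have "dist (k x0 l) (k x0 l0) < e / 2" using d1(2)[of l] dl by (simp add: d_def)
    ultimately show "dist (k (fst p) (snd p)) (k (fst p0) (snd p0)) < e"
      using dist_triangle[of "k x l" "k x0 l0" "k x0 l"] p p0 by simp
  qed
qed

lemma integral_eq_integral_unit_interval:
  fixes k :: "real \<Rightarrow> 'b::banach"
  assumes "continuous_on {c..y} k" "c \<le> y"
  shows "integral {c..y} k = (y - c) *\<^sub>R integral {0..1} (\<lambda>\<theta>. k ((y - c) * \<theta> + c))"
proof (cases "y = c")
  case False
  then have m: "0 < y - c" using assms by simp
  have "(k has_integral integral {c..y} k) (cbox c y)"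
    using integrable_integral[OF integrable_continuous_real[OF assms(1)]] by simp
  from has_integral_affinity'[OF this m, of c]
  have "((\<lambda>\<theta>. k ((y - c) * \<theta> + c)) has_integral (integral {c..y} k /\<^sub>R (y - c))) (cbox 0 1)"
    using m by simp
  then show ?thesis using m by (simp add: integral_unique)
qed simp

lemma continuous_on_integral_upper_param:
  fixes k :: "'a::topological_space \<Rightarrow> real \<Rightarrow> 'b::banach"
  assumes kc: "continuous_on (UNIV \<times> {c..}) (\<lambda>p. k (fst p) (snd p))"
  shows "continuous_on (UNIV \<times> {c..}) (\<lambda>p. integral {c..snd p} (k (fst p)))"
proof -
  let ?m = "\<lambda>q. (fst (fst q), (snd (fst q) - c) * snd q + c)"
  have "continuous_on ((UNIV \<times> {c..}) \<times> cbox 0 1) (\<lambda>q. k (fst (?m q)) (snd (?m q)))"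
    by (intro continuous_on_compose2[OF kc]) (auto intro!: continuous_intros)
  then have "continuous_on (UNIV \<times> {c..})
      (\<lambda>p. integral (cbox 0 1) (\<lambda>\<theta>. k (fst p) ((snd p - c) * \<theta> + c)))"
    by (intro integral_continuous_on_param) (simp add: case_prod_beta')
  then have "continuous_on (UNIV \<times> {c..})
      (\<lambda>p. (snd p - c) *\<^sub>R integral {0..1} (\<lambda>\<theta>. k (fst p) ((snd p - c) * \<theta> + c)))"
    by (auto intro!: continuous_intros)
  then show ?thesis
    by (rule continuous_on_eq)
      (auto simp: integral_eq_integral_unit_interval[OF continuous_on_slice[OF kc]])
qed

lemma has_derivative_integral_param:
  fixes k :: "'a::euclidean_space \<Rightarrow> real \<Rightarrow> 'b::banach" and Dk :: "'a \<Rightarrow> real \<Rightarrow> 'a \<Rightarrow>\<^sub>L 'b"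
  assumes kc: "continuous_on (UNIV \<times> {c..}) (\<lambda>p. k (fst p) (snd p))"
    and Dkc: "continuous_on (UNIV \<times> {c..}) (\<lambda>p. Dk (fst p) (snd p))"
    and kd: "\<And>x l. c \<le> l \<Longrightarrow> ((\<lambda>x. k x l) has_derivative Dk x l) (at x)"
  shows "((\<lambda>x. integral {c..y} (k x)) has_derivative integral {c..y} (Dk x)) (at x)"
proof -
  have "continuous_on (UNIV \<times> cbox c y) (\<lambda>p. Dk (fst p) (snd p))"
    by (rule continuous_on_subset[OF Dkc]) auto
  then have "continuous_on (UNIV \<times> cbox c y) (\<lambda>(x, t). Dk x t)"
    by (simp add: case_prod_beta')
  then have "((\<lambda>x. integral (cbox c y) (k x)) has_derivative integral (cbox c y) (Dk x))
      (at x within UNIV)"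
    using kd integrable_continuous_real[OF continuous_on_slice[OF kc]]
    by (intro leibniz_rule) auto
  then show ?thesis by simp
qed

lemma has_derivative_integral_upper_param:
  fixes k :: "'a::euclidean_space \<Rightarrow> real \<Rightarrow> 'b::banach" and Dk :: "'a \<Rightarrow> real \<Rightarrow> 'a \<Rightarrow>\<^sub>L 'b"
  assumes kc: "continuous_on (UNIV \<times> {c..}) (\<lambda>p. k (fst p) (snd p))"
    and Dkc: "continuous_on (UNIV \<times> {c..}) (\<lambda>p. Dk (fst p) (snd p))"
    and kd: "\<And>x l. c \<le> l \<Longrightarrow> ((\<lambda>x. k x l) has_derivative Dk x l) (at x)"
    and y: "c < y"
  shows "((\<lambda>p. integral {c..snd p} (k (fst p))) has_derivative
           (\<lambda>h. integral {c..y} (Dk x) (fst h) + snd h *\<^sub>R k x y)) (at (x, y))"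
proof -
  have upper: "((\<lambda>y. integral {c..y} (k x)) has_derivative blinfun_scaleR_left (k x y))
      (at y within {c<..})" if "y \<in> {c<..}" for x y
  proof -
    have "((\<lambda>u. integral {c..u} (k x)) has_vector_derivative k x y) (at y within {c..y+1})"
      using that by (intro integral_has_vector_derivative continuous_on_slice[OF kc]) auto
    moreover have "at y within {c..y+1} = at y"
      using that by (intro at_within_interior) (simp add: interior_atLeastAtMost_real)
    ultimately show ?thesis
      by (auto simp: has_vector_derivative_def intro: has_derivative_at_withinI)
  qed
  have "continuous_on (UNIV \<times> {c<..}) (\<lambda>p. k (fst p) (snd p))"
    by (rule continuous_on_subset[OF kc]) auto
  then have "continuous_on (UNIV \<times> {c<..}) (\<lambda>p. blinfun_scaleR_left (k (fst p) (snd p)))"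
    by (intro continuous_intros)
  then have "continuous (at (x, y) within UNIV \<times> {c<..}) (\<lambda>(x, y). blinfun_scaleR_left (k x y))"
    using y by (simp add: continuous_on_eq_continuous_within case_prod_beta')
  then have "((\<lambda>(x, y). integral {c..y} (k x)) has_derivative
      (\<lambda>(hx, hy). integral {c..y} (Dk x) hx + blinfun_scaleR_left (k x y) hy))
      (at (x, y) within UNIV \<times> {c<..})"
    using has_derivative_integral_param[OF kc Dkc kd] upper y
    by (intro has_derivative_partialsI) auto
  moreover have "at (x, y) within UNIV \<times> {c<..} = at (x, y)"
    using y by (intro at_within_open) (auto intro: open_Times)
  ultimately show ?thesis by (simp add: case_prod_beta')
qed

section \<open>Averages over short windows\<close>

lemma integral_upper_diff:
  fixes k :: "real \<Rightarrow> 'b::banach"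
  assumes "continuous_on {c..t} k" "c \<le> s" "s \<le> t"
  shows "integral {c..t} k - integral {c..s} k = integral {s..t} k"
proof -
  have "integral {c..s} k + integral {s..t} k = integral {c..t} k"
    using assms by (intro Henstock_Kurzweil_Integration.integral_combine integrable_continuous_real) auto
  then show ?thesis by (simp add: algebra_simps)
qed

lemma integral_window_integral_eq:
  fixes k :: "real \<Rightarrow> 'b::banach"
  assumes k: "continuous_on {c..} k" and tT: "c \<le> t - T" and T: "0 \<le> T"
  shows "integral {t - T..t} (\<lambda>s. integral {s..t} k)
     = T *\<^sub>R integral {c..t} k - integral {c..t} (\<lambda>y. integral {c..y} k)
       + integral {c..t - T} (\<lambda>y. integral {c..y} k)"
proof -
  define I where "I y = integral {c..y} k" for y
  have Ic: "continuous_on {c..b} I" for b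
    unfolding I_def
    by (intro indefinite_integral_continuous_1 integrable_continuous_real continuous_on_subset[OF k]) auto
  have "integral {t - T..t} (\<lambda>s. integral {s..t} k) = integral {t - T..t} (\<lambda>s. I t - I s)"
    using tT by (intro integral_cong)
      (auto simp: I_def integral_upper_diff[OF continuous_on_subset[OF k]])
  also have "\<dots> = T *\<^sub>R I t - integral {t - T..t} I"
    using tT T continuous_on_subset[OF Ic[of t], of "{t - T..t}"]
    by (subst Henstock_Kurzweil_Integration.integral_diff) (auto intro: integrable_continuous_real)
  also have "integral {t - T..t} I = integral {c..t} I - integral {c..t - T} I"
    using integral_upper_diff[OF Ic] tT T by simp
  finally show ?thesis by (simp add: I_def[abs_def] algebra_simps)
qed

lemma norm_integral_window_integral_le:
  fixes k :: "real \<Rightarrow> 'b::banach"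
  assumes k: "continuous_on {a..b} k" and bound: "\<And>l. l \<in> {a..b} \<Longrightarrow> norm (k l) \<le> M"
    and ab: "a \<le> b"
  shows "norm (integral {a..b} (\<lambda>s. integral {s..b} k)) \<le> M * (b - a)\<^sup>2"
proof -
  have M: "0 \<le> M" using bound[of a] ab by (auto intro: order_trans[OF norm_ge_zero])
  have "norm (integral {s..b} k) \<le> M * (b - a)" if s: "s \<in> {a..b}" for s
  proof -
    have "norm (integral {s..b} k) \<le> M * (b - s)"
      using s by (intro integral_bound continuous_on_subset[OF k] bound) auto
    also have "\<dots> \<le> M * (b - a)" using s M by (intro mult_left_mono) auto
    finally show ?thesis .
  qed
  then have "norm (integral {a..b} (\<lambda>s. integral {s..b} k)) \<le> M * (b - a) * (b - a)"
    using ab k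
    by (intro integral_bound indefinite_integral_continuous_1' integrable_continuous_real) auto
  then show ?thesis by (simp add: power2_eq_square mult.assoc)
qed

lemma tendsto_window_average:
  fixes h :: "real \<Rightarrow> 'b::banach"
  assumes h: "continuous_on UNIV h"
  shows "((\<lambda>\<eta>. (\<eta> / 2) *\<^sub>R integral {l - 1/\<eta>..l + 1/\<eta>} h) \<longlongrightarrow> h l) at_top"
proof (rule tendstoI)
  fix e :: real assume e: "0 < e"
  obtain d where d: "0 < d" "\<And>s. dist s l < d \<Longrightarrow> dist (h s) (h l) < e / 2"
    using h e unfolding continuous_on_iff by (metis UNIV_I half_gt_zero)
  have "dist ((\<eta> / 2) *\<^sub>R integral {l - 1/\<eta>..l + 1/\<eta>} h) (h l) < e" if \<eta>: "2 / d \<le> \<eta>" for \<eta>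
  proof -
    have \<eta>0: "0 < \<eta>" using \<eta> divide_pos_pos[OF _ d(1), of 2] by linarith
    have "1 / \<eta> < d" using \<eta> \<eta>0 d by (simp add: field_simps)
    then have near: "norm (h s - h l) \<le> e / 2" if "s \<in> {l - 1/\<eta>..l + 1/\<eta>}" for s
    proof -
      have "dist s l < d" using that \<open>1 / \<eta> < d\<close> by (auto simp: dist_real_def abs_le_iff)
      then show ?thesis using d(2)[of s] by (simp add: dist_norm)
    qed
    have "integral {l - 1/\<eta>..l + 1/\<eta>} (\<lambda>s. h s - h l)
        = integral {l - 1/\<eta>..l + 1/\<eta>} h - (2 / \<eta>) *\<^sub>R h l"
      using \<eta>0 continuous_on_subset[OF h]
      by (subst Henstock_Kurzweil_Integration.integral_diff) (auto intro: integrable_continuous_real)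
    then have "(\<eta> / 2) *\<^sub>R integral {l - 1/\<eta>..l + 1/\<eta>} h
        = (\<eta> / 2) *\<^sub>R ((2 / \<eta>) *\<^sub>R h l + integral {l - 1/\<eta>..l + 1/\<eta>} (\<lambda>s. h s - h l))"
      by simp
    then have "(\<eta> / 2) *\<^sub>R integral {l - 1/\<eta>..l + 1/\<eta>} h - h l
        = (\<eta> / 2) *\<^sub>R integral {l - 1/\<eta>..l + 1/\<eta>} (\<lambda>s. h s - h l)"
      using \<eta>0 by (simp add: scaleR_add_right)
    moreover have "norm (integral {l - 1/\<eta>..l + 1/\<eta>} (\<lambda>s. h s - h l)) \<le> e / 2 * (2 / \<eta>)"
      using \<eta>0 near continuous_on_subset[OF h]
      by (intro order_trans[OF integral_bound[of _ _ _ "e / 2"]]) (auto intro!: continuous_intros)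
    ultimately have "dist ((\<eta> / 2) *\<^sub>R integral {l - 1/\<eta>..l + 1/\<eta>} h) (h l) \<le> e / 2"
      using \<eta>0 by (simp add: dist_norm field_simps)
    then show ?thesis using e by linarith
  qed
  then show "\<forall>\<^sub>F \<eta> in at_top. dist ((\<eta> / 2) *\<^sub>R integral {l - 1/\<eta>..l + 1/\<eta>} h) (h l) < e"
    unfolding eventually_at_top_linorder by blast
qed

lemma norm_le_if_window_integrals_close:
  fixes h :: "real \<Rightarrow> 'b::banach" and F :: "real \<Rightarrow> real \<Rightarrow> 'b"
  assumes h: "continuous_on UNIV h"
    and F_cont: "\<And>\<eta>. \<eta>0 \<le> \<eta> \<Longrightarrow> continuous_on UNIV (F \<eta>)"
    and F_bound: "\<And>\<eta> s. \<eta>0 \<le> \<eta> \<Longrightarrow> norm (F \<eta> s) \<le> D"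
    and close: "\<And>\<eta>. \<eta>0 \<le> \<eta> \<Longrightarrow> norm (integral {l - 1/\<eta>..l + 1/\<eta>} (\<lambda>s. F \<eta> s - h s)) \<le> D * N \<eta>"
    and N: "((\<lambda>\<eta>. \<eta> * N \<eta>) \<longlongrightarrow> 0) at_top"
  shows "norm (h l) \<le> D"
proof -
  have bound: "norm ((\<eta> / 2) *\<^sub>R integral {l - 1/\<eta>..l + 1/\<eta>} h) \<le> D + D / 2 * (\<eta> * N \<eta>)"
    if \<eta>: "max \<eta>0 1 \<le> \<eta>" for \<eta>
  proof -
    let ?W = "{l - 1/\<eta>..l + 1/\<eta>}"
    have \<eta>0: "0 < \<eta>" "\<eta>0 \<le> \<eta>" using \<eta> by auto
    have split: "integral ?W h = integral ?W (F \<eta>) - integral ?W (\<lambda>s. F \<eta> s - h s)"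
      using continuous_on_subset[OF h] continuous_on_subset[OF F_cont[OF \<eta>0(2)]]
      by (subst Henstock_Kurzweil_Integration.integral_diff) (auto intro: integrable_continuous_real)
    have "norm (integral ?W (F \<eta>)) \<le> D * (2 / \<eta>)"
      using \<eta>0 F_bound continuous_on_subset[OF F_cont[OF \<eta>0(2)]]
      by (intro order_trans[OF integral_bound[of _ _ _ D]]) auto
    moreover have "norm (integral ?W h) \<le> norm (integral ?W (F \<eta>)) + norm (integral ?W (\<lambda>s. F \<eta> s - h s))"
      unfolding split by (rule norm_triangle_ineq4)
    ultimately have "norm (integral ?W h) \<le> D * (2 / \<eta>) + D * N \<eta>"
      using close[OF \<eta>0(2)] by linarith
    then have "\<eta> / 2 * norm (integral ?W h) \<le> \<eta> / 2 * (D * (2 / \<eta>) + D * N \<eta>)"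
      using \<eta>0 by (intro mult_left_mono) auto
    also have "\<dots> = D + D / 2 * (\<eta> * N \<eta>)"
      using \<eta>0 by (simp add: field_simps)
    finally show ?thesis using \<eta>0 by simp
  qed
  have "((\<lambda>\<eta>. D + D / 2 * (\<eta> * N \<eta>)) \<longlongrightarrow> D) at_top"
    using tendsto_add[OF tendsto_const[of D] tendsto_mult_left[OF N, of "D / 2"]] by simp
  moreover note tendsto_norm[OF tendsto_window_average[OF h, of l]]
  moreover have "\<forall>\<^sub>F \<eta> in at_top.
      norm ((\<eta> / 2) *\<^sub>R integral {l - 1/\<eta>..l + 1/\<eta>} h) \<le> D + D / 2 * (\<eta> * N \<eta>)"
    unfolding eventually_at_top_linorder using bound by blast
  ultimately show ?thesis
    by (rule tendsto_le[OF trivial_limit_at_top_linorder])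
qed

section \<open>Adjoints and norm estimates\<close>

definition blinfun_adjoint_apply :: "('a::euclidean_space \<Rightarrow>\<^sub>L 'b::real_inner) \<Rightarrow> 'b \<Rightarrow> 'a" where
  "blinfun_adjoint_apply L u = (\<Sum>b\<in>Basis. (u \<bullet> L b) *\<^sub>R b)"

lemma inner_blinfun_adjoint_apply: "blinfun_adjoint_apply L u \<bullet> v = u \<bullet> L v"
proof -
  have "u \<bullet> L v = u \<bullet> L (\<Sum>b\<in>Basis. (v \<bullet> b) *\<^sub>R b)" by (simp add: euclidean_representation)
  also have "\<dots> = (\<Sum>b\<in>Basis. (v \<bullet> b) * (u \<bullet> L b))"
    by (simp add: blinfun.sum_right blinfun.scaleR_right inner_sum_right)
  also have "\<dots> = blinfun_adjoint_apply L u \<bullet> v"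
    by (simp add: blinfun_adjoint_apply_def inner_sum_left inner_commute[of v] mult.commute)
  finally show ?thesis ..
qed

lemma inner_le_mult_norm: "norm x \<le> d \<Longrightarrow> x \<bullet> v \<le> d * norm v"
  using Cauchy_Schwarz_ineq2[of x v] mult_right_mono[of "norm x" d "norm v"] by auto

lemma norm_blinfun_le_mult: "norm L \<le> c \<Longrightarrow> norm (blinfun_apply L v) \<le> c * norm v"
  using norm_blinfun[of L v] mult_right_mono[of "norm L" c "norm v"] by auto

section \<open>The averaged Lyapunov function\<close>

locale averaging_system =
  fixes f :: "'a::euclidean_space \<Rightarrow> real \<Rightarrow> real \<Rightarrow> 'a"
    and fb :: "'a \<Rightarrow> real \<Rightarrow> 'a"
    and Df :: "'a \<Rightarrow> real \<Rightarrow> real \<Rightarrow> 'a \<Rightarrow>\<^sub>L 'a"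
    and Dfb :: "'a \<Rightarrow> real \<Rightarrow> 'a \<Rightarrow>\<^sub>L 'a"
    and \<delta> N :: "real \<Rightarrow> real"
    and \<eta>o K c1 c2 :: real
    and V Vt :: "'a \<Rightarrow> real \<Rightarrow> real"
    and Vx :: "'a \<Rightarrow> real \<Rightarrow> 'a"
  assumes f_cont_t: "\<And>x. continuous_on UNIV (\<lambda>p. f x (fst p) (snd p))"
    and f_deriv: "\<And>x t \<tau>. ((\<lambda>y. f y t \<tau>) has_derivative blinfun_apply (Df x t \<tau>)) (at x)"
    and Df_cont: "continuous_on UNIV (\<lambda>p. Df (fst p) (fst (snd p)) (snd (snd p)))"
    and fb_cont_t: "\<And>x. continuous_on UNIV (fb x)"
    and fb_deriv: "\<And>x t. ((\<lambda>y. fb y t) has_derivative blinfun_apply (Dfb x t)) (at x)"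
    and Dfb_cont: "continuous_on UNIV (\<lambda>p. Dfb (fst p) (snd p))"
    and \<delta>_K: "classK \<delta>"
    and \<eta>o_pos: "\<eta>o > 0" and K_gt: "K > 1" and N_M: "classM N"
    and avg: "\<And>\<eta> x r. \<eta> \<ge> \<eta>o \<Longrightarrow>
       norm (integral {r - 1/\<eta> .. r + 1/\<eta>} (\<lambda>l. f x l (\<eta>\<^sup>2 * l) - fb x l)) \<le> \<delta> (norm x / 2) * N \<eta>"
    and Dfb_bound: "\<And>x t. norm (Dfb x t) \<le> K"
    and Df_bound: "\<And>x t \<alpha>. \<alpha> > 0 \<Longrightarrow> norm (Df x t (\<alpha> * t)) \<le> K"
    and f_bound: "\<And>x t \<alpha>. \<alpha> > 0 \<Longrightarrow> norm (f x t (\<alpha> * t)) \<le> \<delta> (norm x / 2)"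
    and V_wit: "compat_witness fb \<delta> V Vx Vt c1 c2"
begin

lemma c1_pos: "0 < c1" and c1_lt_1: "c1 < 1"
  and V_derivative_fb_le: "\<And>\<xi> t. 0 \<le> t \<Longrightarrow> Vt \<xi> t + Vx \<xi> t \<bullet> fb \<xi> t \<le> - c1 * (\<delta> (norm \<xi>))\<^sup>2"
  and norm_Vx_le: "\<And>\<xi> t. 0 \<le> t \<Longrightarrow> norm (Vx \<xi> t) \<le> \<delta> (norm \<xi>)"
  and \<delta>_le_linear: "\<And>s. 0 \<le> s \<Longrightarrow> \<delta> s \<le> c2 * s"
  using V_wit unfolding compat_witness_def by auto

lemma V_C1: "C1_tv V Vx Vt"
  using V_wit by (simp add: compat_witness_def lyap_with_def)

lemma V_bounds:
  obtains d1 d2 where "classKinf d1" "classKinf d2"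
    "\<And>\<xi> t. 0 \<le> t \<Longrightarrow> d1 (norm \<xi>) \<le> V \<xi> t \<and> V \<xi> t \<le> d2 (norm \<xi>)"
proof -
  have "lyap_with fb V Vx Vt" using V_wit by (simp add: compat_witness_def)
  then obtain d1 d2 d3 where d: "classKinf d1" "classKinf d2" and b: "\<forall>\<xi> t. 0 \<le> t \<longrightarrow>
      d1 (norm \<xi>) \<le> V \<xi> t \<and> V \<xi> t \<le> d2 (norm \<xi>) \<and> Vt \<xi> t + Vx \<xi> t \<bullet> fb \<xi> t \<le> - d3 (norm \<xi>)"
    unfolding lyap_with_def by blast
  show thesis
    by (rule that[OF d]) (use b in simp)
qed

lemma f_continuous_along: "continuous_on UNIV (\<lambda>l. f x l (\<alpha> * l))"
  by (intro continuous_on_compose2[OF f_cont_t[of x], of UNIV "\<lambda>l. (l, \<alpha> * l)", simplified])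
    (auto intro!: continuous_intros)

lemma f_lipschitz: "0 < \<alpha> \<Longrightarrow> norm (f x l (\<alpha> * l) - f y l (\<alpha> * l)) \<le> K * norm (x - y)"
  by (rule differentiable_bound[of UNIV "\<lambda>x. f x l (\<alpha> * l)" "\<lambda>x. Df x l (\<alpha> * l)"])
    (auto simp: f_deriv Df_bound norm_blinfun.rep_eq[symmetric] has_derivative_at_withinI)

lemma fb_lipschitz: "norm (fb x l - fb y l) \<le> K * norm (x - y)"
  by (rule differentiable_bound[of UNIV "\<lambda>x. fb x l" "\<lambda>x. Dfb x l"])
    (auto simp: fb_deriv Dfb_bound norm_blinfun.rep_eq[symmetric] has_derivative_at_withinI)

lemma norm_fb_le: "norm (fb x l) \<le> \<delta> (norm x / 2)"
proof (rule norm_le_if_window_integrals_close[where F = "\<lambda>\<eta> s. f x s (\<eta>\<^sup>2 * s)"])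
  show "norm (f x s (\<eta>\<^sup>2 * s)) \<le> \<delta> (norm x / 2)" if "\<eta>o \<le> \<eta>" for \<eta> s
    using that \<eta>o_pos by (intro f_bound) auto
  show "((\<lambda>\<eta>. \<eta> * N \<eta>) \<longlongrightarrow> 0) at_top"
    using N_M unfolding classM_def .
  show "norm (integral {l - 1 / \<eta>..l + 1 / \<eta>} (\<lambda>s. f x s (\<eta>\<^sup>2 * s) - fb x s))
      \<le> \<delta> (norm x / 2) * N \<eta>" if "\<eta>o \<le> \<eta>" for \<eta>
    using avg[OF that] .
qed (rule fb_cont_t f_continuous_along)+

end

locale averaging_frequency = averaging_system +
  fixes \<alpha> :: real
  assumes \<alpha>_pos: "0 < \<alpha>"
begin

text \<open>\<open>w\<close> is the correction term of \<open>V_alpha\<close>, written through the antiderivatives \<open>G\<close>, \<open>H\<close> of \<open>g\<close>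
  (see \<open>window_integral_g_eq\<close>); \<open>wx\<close>, \<open>wt\<close> are its partial derivatives, and \<open>Wx\<close>, \<open>Wt\<close> those of
  \<open>V_alpha\<close>, the gradient picking up the transpose of \<open>I - wx\<close>. The base point \<open>c0\<close> lies below
  \<open>- T\<close>, so that for \<open>t \<ge> 0\<close> all integration ranges stay where continuity is known.\<close>

definition "a = sqrt \<alpha>"
definition "T = 2 / a"
definition "c0 = - T - 1"
definition "g \<xi> l = f \<xi> l (\<alpha> * l) - fb \<xi> l"
definition "Dg \<xi> l = Df \<xi> l (\<alpha> * l) - Dfb \<xi> l"
definition "G \<xi> y = integral {c0..y} (g \<xi>)"
definition "DG \<xi> y = integral {c0..y} (Dg \<xi>)"
definition "H \<xi> y = integral {c0..y} (G \<xi>)"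
definition "DH \<xi> y = integral {c0..y} (DG \<xi>)"
definition "w \<xi> t = (a / 2) *\<^sub>R (T *\<^sub>R G \<xi> t - H \<xi> t + H \<xi> (t - T))"
definition "wx \<xi> t = (a / 2) *\<^sub>R (T *\<^sub>R DG \<xi> t - DH \<xi> t + DH \<xi> (t - T))"
definition "wt \<xi> t = (a / 2) *\<^sub>R (T *\<^sub>R g \<xi> t - G \<xi> t + G \<xi> (t - T))"
definition "z \<xi> t = \<xi> - w \<xi> t"
definition "Wx \<xi> t = Vx (z \<xi> t) t - blinfun_adjoint_apply (wx \<xi> t) (Vx (z \<xi> t) t)"
definition "Wt \<xi> t = Vt (z \<xi> t) t - Vx (z \<xi> t) t \<bullet> wt \<xi> t"

lemma a_pos: "0 < a" using \<alpha>_pos by (simp add: a_def)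
lemma T_pos: "0 < T" using a_pos by (simp add: T_def)
lemma c0_less: "c0 < - T" by (simp add: c0_def)

lemma g_lipschitz: "norm (g x l - g y l) \<le> (2 * K) * dist x y"
proof -
  have "norm (g x l - g y l) = norm ((f x l (\<alpha> * l) - f y l (\<alpha> * l)) - (fb x l - fb y l))"
    by (simp add: g_def algebra_simps)
  also have "\<dots> \<le> norm (f x l (\<alpha> * l) - f y l (\<alpha> * l)) + norm (fb x l - fb y l)"
    by (rule norm_triangle_ineq4)
  also have "\<dots> \<le> K * norm (x - y) + K * norm (x - y)"
    using f_lipschitz[OF \<alpha>_pos] fb_lipschitz by (rule add_mono)
  finally show ?thesis by (simp add: dist_norm)
qed

lemma g_continuous: "continuous_on UNIV (\<lambda>p. g (fst p) (snd p))"
proof (rule continuous_on_uncurry_of_lipschitz[OF g_lipschitz])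
  show "0 \<le> 2 * K" using K_gt by simp
  show "continuous_on UNIV (g x)" for x
    unfolding g_def using f_continuous_along fb_cont_t by (intro continuous_intros)
qed

lemma Dg_continuous: "continuous_on UNIV (\<lambda>p. Dg (fst p) (snd p))"
proof -
  have "continuous_on UNIV (\<lambda>p::'a \<times> real. Df (fst p) (snd p) (\<alpha> * snd p))"
    by (intro continuous_on_compose2[OF Df_cont, of UNIV "\<lambda>p. (fst p, snd p, \<alpha> * snd p)", simplified])
      (auto intro!: continuous_intros)
  then show ?thesis
    unfolding Dg_def using Dfb_cont by (intro continuous_intros) auto
qed

lemma g_has_derivative: "((\<lambda>x. g x l) has_derivative Dg x l) (at x)"
  unfolding g_def Dg_def blinfun.diff_left by (intro has_derivative_diff f_deriv fb_deriv)

lemma g_continuous_from_c0: "continuous_on (UNIV \<times> {c0..}) (\<lambda>p. g (fst p) (snd p))"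
  and Dg_continuous_from_c0: "continuous_on (UNIV \<times> {c0..}) (\<lambda>p. Dg (fst p) (snd p))"
  by (auto intro: continuous_on_subset[OF g_continuous] continuous_on_subset[OF Dg_continuous])

lemma G_continuous: "continuous_on (UNIV \<times> {c0..}) (\<lambda>p. G (fst p) (snd p))"
  and DG_continuous: "continuous_on (UNIV \<times> {c0..}) (\<lambda>p. DG (fst p) (snd p))"
  unfolding G_def DG_def
  by (intro continuous_on_integral_upper_param g_continuous_from_c0 Dg_continuous_from_c0)+

lemma DH_continuous: "continuous_on (UNIV \<times> {c0..}) (\<lambda>p. DH (fst p) (snd p))"
  unfolding DH_def using continuous_on_integral_upper_param[OF DG_continuous] by simp

lemma G_has_derivative_x: "((\<lambda>x. G x y) has_derivative DG x y) (at x)"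
  unfolding G_def DG_def
  by (rule has_derivative_integral_param[OF g_continuous_from_c0 Dg_continuous_from_c0 g_has_derivative])

lemma G_has_derivative: "c0 < y \<Longrightarrow> ((\<lambda>p. G (fst p) (snd p)) has_derivative
    (\<lambda>h. DG x y (fst h) + snd h *\<^sub>R g x y)) (at (x, y))"
  unfolding G_def DG_def
  by (rule has_derivative_integral_upper_param[OF g_continuous_from_c0 Dg_continuous_from_c0 g_has_derivative])

lemma H_has_derivative: "c0 < y \<Longrightarrow> ((\<lambda>p. H (fst p) (snd p)) has_derivative
    (\<lambda>h. DH x y (fst h) + snd h *\<^sub>R G x y)) (at (x, y))"
  unfolding H_def DH_def
  by (rule has_derivative_integral_upper_param[OF G_continuous DG_continuous G_has_derivative_x])

lemma H_shift_has_derivative: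
  assumes "c0 < y - T"
  shows "((\<lambda>p. H (fst p) (snd p - T)) has_derivative
    (\<lambda>h. DH x (y - T) (fst h) + snd h *\<^sub>R G x (y - T))) (at (x, y))"
proof -
  have shift: "((\<lambda>p. (fst p, snd p - T)) has_derivative (\<lambda>h. (fst h, snd h))) (at (x, y))"
    by (auto intro!: derivative_eq_intros)
  have "((\<lambda>p. H (fst p) (snd p)) has_derivative
      (\<lambda>h. DH x (y - T) (fst h) + snd h *\<^sub>R G x (y - T))) (at ((\<lambda>p. (fst p, snd p - T)) (x, y)))"
    using H_has_derivative[OF assms, of x] by simp
  from diff_chain_at[OF shift this] show ?thesis by (simp add: o_def)
qed

lemma w_has_derivative:
  assumes t: "0 \<le> t"
  shows "((\<lambda>p. w (fst p) (snd p)) has_derivative (\<lambda>h. wx x t (fst h) + snd h *\<^sub>R wt x t)) (at (x, t))"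
proof -
  have t1: "c0 < t" and t2: "c0 < t - T" using t c0_less T_pos by auto
  have "((\<lambda>p. (a / 2) *\<^sub>R (T *\<^sub>R G (fst p) (snd p) - H (fst p) (snd p) + H (fst p) (snd p - T)))
      has_derivative
     (\<lambda>h. (a / 2) *\<^sub>R (T *\<^sub>R (DG x t (fst h) + snd h *\<^sub>R g x t)
        - (DH x t (fst h) + snd h *\<^sub>R G x t)
        + (DH x (t - T) (fst h) + snd h *\<^sub>R G x (t - T))))) (at (x, t))"
    by (intro has_derivative_scaleR_right has_derivative_add has_derivative_diff
        G_has_derivative[OF t1] H_has_derivative[OF t1] H_shift_has_derivative[OF t2])
  moreover have "(\<lambda>h. (a / 2) *\<^sub>R (T *\<^sub>R (DG x t (fst h) + snd h *\<^sub>R g x t)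
        - (DH x t (fst h) + snd h *\<^sub>R G x t)
        + (DH x (t - T) (fst h) + snd h *\<^sub>R G x (t - T))))
      = (\<lambda>h. wx x t (fst h) + snd h *\<^sub>R wt x t)"
    by (rule ext) (simp add: wx_def wt_def blinfun.bilinear_simps algebra_simps)
  ultimately show ?thesis
    unfolding w_def by simp
qed

lemma g_continuous_on: "S \<subseteq> {c0..} \<Longrightarrow> continuous_on S (g \<xi>)"
  and Dg_continuous_on: "S \<subseteq> {c0..} \<Longrightarrow> continuous_on S (Dg \<xi>)"
  by (rule continuous_on_slice[OF g_continuous_from_c0] continuous_on_slice[OF Dg_continuous_from_c0];
      assumption)+

lemma window_integral_g_eq:
  assumes "0 \<le> t"
  shows "integral {t - T..t} (\<lambda>s. integral {s..t} (g \<xi>)) = T *\<^sub>R G \<xi> t - H \<xi> t + H \<xi> (t - T)"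
  unfolding H_def G_def[abs_def]
  using assms c0_less T_pos by (intro integral_window_integral_eq g_continuous_on) auto

lemma window_integral_Dg_eq:
  assumes "0 \<le> t"
  shows "integral {t - T..t} (\<lambda>s. integral {s..t} (Dg \<xi>)) = T *\<^sub>R DG \<xi> t - DH \<xi> t + DH \<xi> (t - T)"
  unfolding DH_def DG_def[abs_def]
  using assms c0_less T_pos by (intro integral_window_integral_eq Dg_continuous_on) auto

lemma V_alpha_eq: "0 \<le> t \<Longrightarrow> V_alpha V f fb \<alpha> \<xi> t = V (z \<xi> t) t"
  unfolding V_alpha_def z_def w_def window_integral_g_eq[symmetric]
  by (simp add: a_def T_def g_def[abs_def])

lemma continuous_on_shift:
  fixes F :: "'a \<Rightarrow> real \<Rightarrow> 'c::topological_space"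
  assumes F: "continuous_on (UNIV \<times> {c0..}) (\<lambda>p. F (fst p) (snd p))" and s: "s \<le> T"
  shows "continuous_on (UNIV \<times> {0..}) (\<lambda>p. F (fst p) (snd p - s))"
  using s c0_less
  by (intro continuous_on_compose2[OF F, of _ "\<lambda>p. (fst p, snd p - s)", simplified])
    (auto intro!: continuous_intros)

lemma w_continuous: "continuous_on (UNIV \<times> {0..}) (\<lambda>p. w (fst p) (snd p))"
  by (intro continuous_at_imp_continuous_on ballI)
    (auto intro: has_derivative_continuous[OF w_has_derivative])

lemma wx_continuous: "continuous_on (UNIV \<times> {0..}) (\<lambda>p. wx (fst p) (snd p))"
  and wt_continuous: "continuous_on (UNIV \<times> {0..}) (\<lambda>p. wt (fst p) (snd p))"
  using continuous_on_shift[OF DG_continuous, of 0] continuous_on_shift[OF DH_continuous, of 0]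
    continuous_on_shift[OF DH_continuous, of T] continuous_on_shift[OF G_continuous, of 0]
    continuous_on_shift[OF G_continuous, of T] continuous_on_subset[OF g_continuous] T_pos
  unfolding wx_def wt_def by (auto intro!: continuous_intros)

lemma continuous_on_along_z:
  fixes F :: "'a \<Rightarrow> real \<Rightarrow> 'c::topological_space"
  assumes "continuous_on (UNIV \<times> {0..}) (\<lambda>p. F (fst p) (snd p))"
  shows "continuous_on (UNIV \<times> {0..}) (\<lambda>p. F (z (fst p) (snd p)) (snd p))"
  unfolding z_def using w_continuous
  by (intro continuous_on_compose2[OF assms, of _ "\<lambda>p. (fst p - w (fst p) (snd p), snd p)", simplified])
    (auto intro!: continuous_intros)

lemma V_alpha_has_derivative:
  assumes t: "0 \<le> t"
  shows "((\<lambda>p. V_alpha V f fb \<alpha> (fst p) (snd p)) has_derivative (\<lambda>h. Wx \<xi> t \<bullet> fst h + Wt \<xi> t * snd h))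
    (at (\<xi>, t) within UNIV \<times> {0..})"
proof -
  let ?S = "UNIV \<times> {0::real..}"
  let ?m = "\<lambda>p::'a \<times> real. (fst p - w (fst p) (snd p), snd p)"
  let ?m' = "\<lambda>h. (fst h - (wx \<xi> t (fst h) + snd h *\<^sub>R wt \<xi> t), snd h)"
  have "(?m has_derivative ?m') (at (\<xi>, t))"
    by (intro has_derivative_Pair has_derivative_diff w_has_derivative[OF t]
        has_derivative_fst[OF has_derivative_ident] has_derivative_snd[OF has_derivative_ident])
  then have m: "(?m has_derivative ?m') (at (\<xi>, t) within ?S)"
    by (rule has_derivative_at_withinI)
  have V: "((\<lambda>q. V (fst q) (snd q)) has_derivative
      (\<lambda>h. Vx (fst q) (snd q) \<bullet> fst h + Vt (fst q) (snd q) * snd h)) (at q within ?S)"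
    if "q \<in> ?S" for q
    using V_C1 that unfolding C1_tv_def by (cases q) auto
  have "((\<lambda>p. V (fst (?m p)) (snd (?m p))) has_derivative
      (\<lambda>h. Vx (fst (?m (\<xi>, t))) (snd (?m (\<xi>, t))) \<bullet> fst (?m' h)
        + Vt (fst (?m (\<xi>, t))) (snd (?m (\<xi>, t))) * snd (?m' h))) (at (\<xi>, t) within ?S)"
    by (rule has_derivative_in_compose2[of ?S _ _ ?m, OF V _ _ m]) (use t in auto)
  moreover have "(\<lambda>h. Vx (fst (?m (\<xi>, t))) (snd (?m (\<xi>, t))) \<bullet> fst (?m' h)
        + Vt (fst (?m (\<xi>, t))) (snd (?m (\<xi>, t))) * snd (?m' h))
      = (\<lambda>h. Wx \<xi> t \<bullet> fst h + Wt \<xi> t * snd h)"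
    by (rule ext) (simp add: Wx_def Wt_def z_def inner_blinfun_adjoint_apply inner_diff_left
        inner_diff_right inner_add_right algebra_simps)
  ultimately have "((\<lambda>p. V (fst (?m p)) (snd (?m p))) has_derivative
      (\<lambda>h. Wx \<xi> t \<bullet> fst h + Wt \<xi> t * snd h)) (at (\<xi>, t) within ?S)"
    by simp
  then show ?thesis
  proof (rule has_derivative_transform_within[OF _ zero_less_one])
    show "(\<xi>, t) \<in> ?S" using t by simp
    show "V (fst (?m p)) (snd (?m p)) = V_alpha V f fb \<alpha> (fst p) (snd p)" if "p \<in> ?S" for p
      using that by (auto simp: V_alpha_eq z_def)
  qed
qed

lemma C1_tv_V_alpha: "C1_tv (V_alpha V f fb \<alpha>) Wx Wt"
proof -
  have Vx: "continuous_on (UNIV \<times> {0..}) (\<lambda>p. Vx (fst p) (snd p))"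
    and Vt: "continuous_on (UNIV \<times> {0..}) (\<lambda>p. Vt (fst p) (snd p))"
    using V_C1 unfolding C1_tv_def by auto
  note continuous_on_along_z[OF Vx] continuous_on_along_z[OF Vt]
  then have "continuous_on (UNIV \<times> {0..}) (\<lambda>p. Wx (fst p) (snd p))"
    and "continuous_on (UNIV \<times> {0..}) (\<lambda>p. Wt (fst p) (snd p))"
    unfolding Wx_def Wt_def blinfun_adjoint_apply_def
    using wx_continuous wt_continuous by (auto intro!: continuous_intros)
  then show ?thesis
    unfolding C1_tv_def using V_alpha_has_derivative by blast
qed

lemma norm_g_le: "norm (g \<xi> l) \<le> 2 * \<delta> (norm \<xi> / 2)"
  using norm_triangle_ineq4[of "f \<xi> l (\<alpha> * l)" "fb \<xi> l"] f_bound[OF \<alpha>_pos, of \<xi> l] norm_fb_le[of \<xi> l]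
  by (simp add: g_def)

lemma norm_Dg_le: "norm (Dg \<xi> l) \<le> 2 * K"
  using norm_triangle_ineq4[of "Df \<xi> l (\<alpha> * l)" "Dfb \<xi> l"] Df_bound[OF \<alpha>_pos, of \<xi> l] Dfb_bound[of \<xi> l]
  by (simp add: Dg_def)

lemma norm_w_le: "0 \<le> t \<Longrightarrow> norm (w \<xi> t) \<le> 4 * \<delta> (norm \<xi> / 2) / a"
proof -
  assume t: "0 \<le> t"
  have "norm (integral {t - T..t} (\<lambda>s. integral {s..t} (g \<xi>))) \<le> 2 * \<delta> (norm \<xi> / 2) * (t - (t - T))\<^sup>2"
    using t c0_less T_pos by (intro norm_integral_window_integral_le g_continuous_on norm_g_le) auto
  then have "norm (w \<xi> t) \<le> a / 2 * (2 * \<delta> (norm \<xi> / 2) * T\<^sup>2)"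
    using a_pos by (simp add: w_def window_integral_g_eq[OF t, symmetric])
  also have "\<dots> = 4 * \<delta> (norm \<xi> / 2) / a"
    using a_pos by (simp add: T_def field_simps power2_eq_square)
  finally show ?thesis .
qed

lemma norm_wx_le: "0 \<le> t \<Longrightarrow> norm (wx \<xi> t) \<le> 4 * K / a"
proof -
  assume t: "0 \<le> t"
  have "norm (integral {t - T..t} (\<lambda>s. integral {s..t} (Dg \<xi>))) \<le> 2 * K * (t - (t - T))\<^sup>2"
    using t c0_less T_pos by (intro norm_integral_window_integral_le Dg_continuous_on norm_Dg_le) auto
  then have "norm (wx \<xi> t) \<le> a / 2 * (2 * K * T\<^sup>2)"
    using a_pos by (simp add: wx_def window_integral_Dg_eq[OF t, symmetric])
  also have "\<dots> = 4 * K / a"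
    using a_pos by (simp add: T_def field_simps power2_eq_square)
  finally show ?thesis .
qed

lemma wt_eq: "wt \<xi> t = g \<xi> t - (a / 2) *\<^sub>R (G \<xi> t - G \<xi> (t - T))"
  using a_pos by (simp add: wt_def T_def algebra_simps)

lemma norm_G_window_le:
  assumes "\<eta>o \<le> a" "0 \<le> t"
  shows "norm (G \<xi> t - G \<xi> (t - T)) \<le> \<delta> (norm \<xi> / 2) * N a"
proof -
  have "G \<xi> t - G \<xi> (t - T) = integral {(t - 1 / a) - 1 / a..(t - 1 / a) + 1 / a} (g \<xi>)"
    unfolding G_def using assms c0_less T_pos
    by (subst integral_upper_diff[OF g_continuous_on]) (auto simp: T_def)
  also have "g \<xi> = (\<lambda>l. f \<xi> l (a\<^sup>2 * l) - fb \<xi> l)"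
    using \<alpha>_pos by (auto simp: g_def a_def)
  finally show ?thesis using avg[OF assms(1), of "t - 1 / a" \<xi>] by simp
qed

end

text \<open>Largeness of \<open>\<alpha>\<close>: the second condition gives \<open>norm (w \<xi> t) \<le> norm \<xi> / 2\<close> by (P3), the last two
  make each of the two error terms in the derivative of \<open>V_alpha\<close> at most \<open>c1 / 4 * \<delta> (norm \<xi> / 2)\<close>.\<close>

locale large_frequency = averaging_frequency +
  assumes large_\<eta>o: "\<eta>o \<le> sqrt \<alpha>"
    and large_c2: "4 * c2 \<le> sqrt \<alpha>"
    and large_K: "32 * K \<le> c1 * sqrt \<alpha>"
    and large_N: "sqrt \<alpha> * \<bar>N (sqrt \<alpha>)\<bar> \<le> c1 / 2"
begin

lemma z_bounds:
  assumes t: "0 \<le> t"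
  shows "norm \<xi> / 2 \<le> norm (z \<xi> t)" and "norm (z \<xi> t) \<le> 3 / 2 * norm \<xi>"
proof -
  have "4 * \<delta> (norm \<xi> / 2) \<le> 4 * c2 * (norm \<xi> / 2)"
    using \<delta>_le_linear[of "norm \<xi> / 2"] by simp
  also have "\<dots> \<le> a * (norm \<xi> / 2)"
    using large_c2 by (intro mult_right_mono) (auto simp: a_def)
  moreover have "a * norm (w \<xi> t) \<le> 4 * \<delta> (norm \<xi> / 2)"
    using norm_w_le[OF t, of \<xi>] a_pos by (simp add: field_simps)
  ultimately have "a * norm (w \<xi> t) \<le> a * (norm \<xi> / 2)" by linarith
  then have "norm (w \<xi> t) \<le> norm \<xi> / 2" using a_pos by simp
  then show "norm \<xi> / 2 \<le> norm (z \<xi> t)" and "norm (z \<xi> t) \<le> 3 / 2 * norm \<xi>"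
    using norm_triangle_ineq2[of \<xi> "w \<xi> t"] norm_triangle_ineq4[of \<xi> "w \<xi> t"]
    by (auto simp: z_def)
qed

lemma \<delta>_half_le_\<delta>_z: "0 \<le> t \<Longrightarrow> \<delta> (norm \<xi> / 2) \<le> \<delta> (norm (z \<xi> t))"
  using z_bounds(1)[of t \<xi>] by (intro classK_mono[OF \<delta>_K]) auto

lemma K_div_a_le: "4 * K / a \<le> c1 / 8"
  using large_K a_pos by (simp add: a_def field_simps)

lemma norm_wx_le_c1: "0 \<le> t \<Longrightarrow> norm (wx \<xi> t) \<le> c1 / 8"
  using norm_wx_le[of t \<xi>] K_div_a_le by linarith

lemma norm_error_le:
  assumes t: "0 \<le> t"
  shows "norm (fb \<xi> t - fb (z \<xi> t) t + (a / 2) *\<^sub>R (G \<xi> t - G \<xi> (t - T)) - wx \<xi> t (f \<xi> t (\<alpha> * t)))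
    \<le> c1 / 2 * \<delta> (norm \<xi> / 2)"
proof -
  define D where "D = \<delta> (norm \<xi> / 2)"
  have D: "0 \<le> D" unfolding D_def by (rule classK_nonneg[OF \<delta>_K]) simp
  have "norm (fb \<xi> t - fb (z \<xi> t) t) \<le> K * norm (w \<xi> t)"
    using fb_lipschitz[of \<xi> t "z \<xi> t"] by (simp add: z_def)
  also have "\<dots> \<le> K * (4 * D / a)"
    using norm_w_le[OF t] K_gt by (intro mult_left_mono) (auto simp: D_def)
  also have "\<dots> = 4 * K / a * D" by simp
  also have "\<dots> \<le> c1 / 8 * D"
    using K_div_a_le D by (rule mult_right_mono)
  finally have fb_err: "norm (fb \<xi> t - fb (z \<xi> t) t) \<le> c1 / 8 * D" .
  have "norm (G \<xi> t - G \<xi> (t - T)) \<le> D * N a"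
    using norm_G_window_le[OF _ t, of \<xi>] large_\<eta>o by (simp add: a_def D_def)
  also have "\<dots> \<le> D * \<bar>N a\<bar>"
    using D by (intro mult_left_mono) auto
  finally have "norm ((a / 2) *\<^sub>R (G \<xi> t - G \<xi> (t - T))) \<le> a / 2 * (D * \<bar>N a\<bar>)"
    using a_pos by (simp add: mult_left_mono)
  also have "\<dots> = D / 2 * (a * \<bar>N a\<bar>)" by simp
  also have "\<dots> \<le> D / 2 * (c1 / 2)"
    using large_N D by (intro mult_left_mono) (auto simp: a_def)
  finally have avg_err: "norm ((a / 2) *\<^sub>R (G \<xi> t - G \<xi> (t - T))) \<le> c1 / 4 * D" by (simp add: ac_simps)
  have "norm (wx \<xi> t (f \<xi> t (\<alpha> * t))) \<le> c1 / 8 * norm (f \<xi> t (\<alpha> * t))"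
    by (rule norm_blinfun_le_mult[OF norm_wx_le_c1[OF t]])
  also have "\<dots> \<le> c1 / 8 * D"
    using f_bound[OF \<alpha>_pos, of \<xi> t] c1_pos by (simp add: D_def)
  finally have "norm (wx \<xi> t (f \<xi> t (\<alpha> * t))) \<le> c1 / 8 * D" .
  with fb_err avg_err show ?thesis
    unfolding D_def[symmetric]
    using norm_triangle_ineq4[of "fb \<xi> t - fb (z \<xi> t) t + (a / 2) *\<^sub>R (G \<xi> t - G \<xi> (t - T))"
        "wx \<xi> t (f \<xi> t (\<alpha> * t))"]
      norm_triangle_ineq[of "fb \<xi> t - fb (z \<xi> t) t" "(a / 2) *\<^sub>R (G \<xi> t - G \<xi> (t - T))"]
    by linarith
qed

lemma W_derivative_le:
  assumes t: "0 \<le> t"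
  shows "Wt \<xi> t + Wx \<xi> t \<bullet> (f \<xi> t (\<alpha> * t) + u)
    \<le> - (c1 / 2) * (\<delta> (norm (z \<xi> t)))\<^sup>2 + 2 * \<delta> (norm (z \<xi> t)) * norm u"
proof -
  define \<zeta> where "\<zeta> = z \<xi> t"
  define d where "d = \<delta> (norm \<zeta>)"
  define e where "e = fb \<xi> t - fb \<zeta> t + (a / 2) *\<^sub>R (G \<xi> t - G \<xi> (t - T)) - wx \<xi> t (f \<xi> t (\<alpha> * t))"
  have d: "0 \<le> d" unfolding d_def by (rule classK_nonneg[OF \<delta>_K]) simp
  have CS: "Vx \<zeta> t \<bullet> v \<le> d * norm v" for v
    using norm_Vx_le[OF t, of \<zeta>] unfolding d_def by (rule inner_le_mult_norm)
  have split: "Wt \<xi> t + Wx \<xi> t \<bullet> (f \<xi> t (\<alpha> * t) + u)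
      = (Vt \<zeta> t + Vx \<zeta> t \<bullet> fb \<zeta> t) + Vx \<zeta> t \<bullet> e + Vx \<zeta> t \<bullet> (u - wx \<xi> t u)"
    by (simp add: Wx_def Wt_def wt_eq g_def \<zeta>_def e_def inner_blinfun_adjoint_apply blinfun.add_right
        inner_diff_left inner_diff_right inner_add_right algebra_simps)
  have fb_part: "Vt \<zeta> t + Vx \<zeta> t \<bullet> fb \<zeta> t \<le> - c1 * d\<^sup>2"
    unfolding d_def by (rule V_derivative_fb_le[OF t])
  have error_part: "Vx \<zeta> t \<bullet> e \<le> c1 / 2 * d\<^sup>2"
  proof -
    have "norm e \<le> c1 / 2 * \<delta> (norm \<xi> / 2)"
      using norm_error_le[OF t, of \<xi>] by (simp add: e_def \<zeta>_def)
    also have "\<dots> \<le> c1 / 2 * d"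
      using \<delta>_half_le_\<delta>_z[OF t, of \<xi>] c1_pos by (simp add: d_def \<zeta>_def)
    finally have "d * norm e \<le> d * (c1 / 2 * d)"
      using d by (rule mult_left_mono)
    moreover have "d * (c1 / 2 * d) = c1 / 2 * d\<^sup>2" by (simp add: power2_eq_square)
    ultimately show ?thesis using CS[of e] by linarith
  qed
  have input_part: "Vx \<zeta> t \<bullet> (u - wx \<xi> t u) \<le> 2 * d * norm u"
  proof -
    have "norm (wx \<xi> t) \<le> 1"
      using norm_wx_le_c1[OF t, of \<xi>] c1_lt_1 by linarith
    then have "norm (wx \<xi> t u) \<le> norm u"
      using norm_blinfun_le_mult by fastforce
    then have "norm (u - wx \<xi> t u) \<le> 2 * norm u"
      using norm_triangle_ineq4[of u "wx \<xi> t u"] by linarith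
    then have "d * norm (u - wx \<xi> t u) \<le> d * (2 * norm u)"
      using d by (rule mult_left_mono)
    then show ?thesis using CS[of "u - wx \<xi> t u"] by simp
  qed
  have "- c1 * d\<^sup>2 + c1 / 2 * d\<^sup>2 + 2 * d * norm u = - (c1 / 2) * d\<^sup>2 + 2 * d * norm u"
    by (simp add: algebra_simps)
  then show ?thesis
    using split fb_part error_part input_part by (simp add: \<zeta>_def d_def)
qed

lemma \<delta>_half_power2_le: "0 \<le> t \<Longrightarrow> (\<delta> (norm \<xi> / 2))\<^sup>2 \<le> (\<delta> (norm (z \<xi> t)))\<^sup>2"
  using \<delta>_half_le_\<delta>_z classK_nonneg[OF \<delta>_K] by (intro power_mono) auto

lemma V_alpha_bounds:
  obtains d1 d2 where "classKinf d1" "classKinf d2"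
    "\<And>\<xi> t. 0 \<le> t \<Longrightarrow> d1 (norm \<xi>) \<le> V_alpha V f fb \<alpha> \<xi> t \<and> V_alpha V f fb \<alpha> \<xi> t \<le> d2 (norm \<xi>)"
proof -
  obtain d1 d2 where d: "classKinf d1" "classKinf d2"
    and V: "\<And>\<xi> t. 0 \<le> t \<Longrightarrow> d1 (norm \<xi>) \<le> V \<xi> t \<and> V \<xi> t \<le> d2 (norm \<xi>)"
    using V_bounds by blast
  have K: "classK d1" "classK d2" using d unfolding classKinf_def by auto
  show thesis
  proof (rule that)
    show "classKinf (\<lambda>s. d1 (1 / 2 * s))"
      using classKinf_compose_scale[OF d(1), of "1 / 2"] by simp
    show "classKinf (\<lambda>s. d2 (3 / 2 * s))"
      using classKinf_compose_scale[OF d(2), of "3 / 2"] by simp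
    fix \<xi> and t :: real assume t: "0 \<le> t"
    have "d1 (1 / 2 * norm \<xi>) \<le> d1 (norm (z \<xi> t))" "d2 (norm (z \<xi> t)) \<le> d2 (3 / 2 * norm \<xi>)"
      using z_bounds[OF t, of \<xi>] by (auto intro: classK_mono[OF K(1)] classK_mono[OF K(2)])
    then show "d1 (1 / 2 * norm \<xi>) \<le> V_alpha V f fb \<alpha> \<xi> t \<and> V_alpha V f fb \<alpha> \<xi> t \<le> d2 (3 / 2 * norm \<xi>)"
      using V[OF t, of "z \<xi> t"] V_alpha_eq[OF t] by auto
  qed
qed

lemma unif_proper_pd_V_alpha: "unif_proper_pd (V_alpha V f fb \<alpha>)"
proof -
  obtain d1 d2 where "classKinf d1" "classKinf d2"
    "\<And>\<xi> t. 0 \<le> t \<Longrightarrow> d1 (norm \<xi>) \<le> V_alpha V f fb \<alpha> \<xi> t \<and> V_alpha V f fb \<alpha> \<xi> t \<le> d2 (norm \<xi>)"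
    using V_alpha_bounds by blast
  then show ?thesis unfolding unif_proper_pd_def by blast
qed

lemma classK_decay: "0 < k \<Longrightarrow> classK (\<lambda>s. k * (\<delta> (s / 2))\<^sup>2)"
  using classK_cmult[OF classK_power2[OF classK_compose_scale[OF \<delta>_K, of "1 / 2"]]] by simp

lemma lyapunov_fun_V_alpha: "lyapunov_fun (\<lambda>\<xi> t. f \<xi> t (\<alpha> * t)) (V_alpha V f fb \<alpha>)"
proof -
  obtain d1 d2 where d: "classKinf d1" "classKinf d2"
    and V: "\<And>\<xi> t. 0 \<le> t \<Longrightarrow> d1 (norm \<xi>) \<le> V_alpha V f fb \<alpha> \<xi> t \<and> V_alpha V f fb \<alpha> \<xi> t \<le> d2 (norm \<xi>)"
    using V_alpha_bounds by blast
  have "Wt \<xi> t + Wx \<xi> t \<bullet> f \<xi> t (\<alpha> * t) \<le> - (c1 / 2 * (\<delta> (norm \<xi> / 2))\<^sup>2)" if t: "0 \<le> t" for \<xi> t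
  proof -
    have "c1 / 2 * (\<delta> (norm \<xi> / 2))\<^sup>2 \<le> c1 / 2 * (\<delta> (norm (z \<xi> t)))\<^sup>2"
      using \<delta>_half_power2_le[OF t, of \<xi>] c1_pos by simp
    moreover have "Wt \<xi> t + Wx \<xi> t \<bullet> f \<xi> t (\<alpha> * t) \<le> - (c1 / 2) * (\<delta> (norm (z \<xi> t)))\<^sup>2"
      using W_derivative_le[OF t, of \<xi> 0] by simp
    ultimately show ?thesis by linarith
  qed
  then show ?thesis
    unfolding lyapunov_fun_def lyap_with_def
    using C1_tv_V_alpha d V classK_decay[of "c1 / 2"] c1_pos
    by (intro exI[of _ Wx] exI[of _ Wt] conjI exI[of _ d1] exI[of _ d2]
        exI[of _ "\<lambda>s. c1 / 2 * (\<delta> (s / 2))\<^sup>2"]) auto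
qed

lemma iISS_lyapunov_fun_V_alpha: "iISS_lyapunov_fun (\<lambda>\<xi> t u. f \<xi> t (\<alpha> * t) + u) (V_alpha V f fb \<alpha>)"
proof -
  have "Wt \<xi> t + Wx \<xi> t \<bullet> (f \<xi> t (\<alpha> * t) + u)
      \<le> - (c1 / 4 * (\<delta> (norm \<xi> / 2))\<^sup>2) + 4 / c1 * (norm u)\<^sup>2" if t: "0 \<le> t" for \<xi> u t
  proof -
    define d where "d = \<delta> (norm (z \<xi> t))"
    have "0 \<le> c1 / 4 * (d - 4 / c1 * norm u)\<^sup>2" using c1_pos by simp
    also have "\<dots> = c1 / 4 * d\<^sup>2 - 2 * d * norm u + 4 / c1 * (norm u)\<^sup>2"
      using c1_pos by (simp add: field_simps power2_eq_square)
    finally have "2 * d * norm u \<le> c1 / 4 * d\<^sup>2 + 4 / c1 * (norm u)\<^sup>2" by simp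
    moreover have "c1 / 4 * (\<delta> (norm \<xi> / 2))\<^sup>2 \<le> c1 / 4 * d\<^sup>2"
      using \<delta>_half_power2_le[OF t, of \<xi>] c1_pos by (simp add: d_def)
    ultimately show ?thesis
      using W_derivative_le[OF t, of \<xi> u] by (simp add: d_def)
  qed
  moreover have "pos_def_fun (\<lambda>s. c1 / 4 * (\<delta> (s / 2))\<^sup>2)"
    using classK_decay[of "c1 / 4"] c1_pos unfolding classK_def by simp
  moreover have "classKinf (\<lambda>r. 4 / c1 * r\<^sup>2)"
    using classKinf_cmult[OF classKinf_power2[OF classKinf_id], of "4 / c1"] c1_pos by simp
  ultimately show ?thesis
    unfolding iISS_lyapunov_fun_def using C1_tv_V_alpha unif_proper_pd_V_alpha by blast
qed

lemma ISS_lyapunov_fun_V_alpha: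
  assumes \<delta>_Kinf: "classKinf \<delta>"
  shows "ISS_lyapunov_fun (\<lambda>\<xi> t u. f \<xi> t (\<alpha> * t) + u) (V_alpha V f fb \<alpha>)"
proof -
  have "Wt \<xi> t + Wx \<xi> t \<bullet> (f \<xi> t (\<alpha> * t) + u) \<le> - (c1 / 4 * (\<delta> (norm \<xi> / 2))\<^sup>2)"
    if t: "0 \<le> t" and u: "norm u \<le> c1 / 8 * \<delta> (norm \<xi> / 2)" for \<xi> u t
  proof -
    define d where "d = \<delta> (norm (z \<xi> t))"
    have d: "0 \<le> d" unfolding d_def by (rule classK_nonneg[OF \<delta>_K]) simp
    have "c1 / 8 * \<delta> (norm \<xi> / 2) \<le> c1 / 8 * d"
      using \<delta>_half_le_\<delta>_z[OF t, of \<xi>] c1_pos unfolding d_def by simp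
    then have "norm u \<le> c1 / 8 * d" using u by linarith
    then have "2 * d * norm u \<le> c1 / 4 * d\<^sup>2"
      using d mult_left_mono[of "norm u" "c1 / 8 * d" "2 * d"] by (simp add: power2_eq_square)
    moreover have "c1 / 4 * (\<delta> (norm \<xi> / 2))\<^sup>2 \<le> c1 / 4 * d\<^sup>2"
      using \<delta>_half_power2_le[OF t, of \<xi>] c1_pos by (simp add: d_def)
    ultimately show ?thesis
      using W_derivative_le[OF t, of \<xi> u] by (simp add: d_def)
  qed
  moreover have "classKinf (\<lambda>s. c1 / 8 * \<delta> (s / 2))"
    using classKinf_cmult[OF classKinf_compose_scale[OF \<delta>_Kinf, of "1 / 2"], of "c1 / 8"] c1_pos
    by simp
  moreover have "classKinf (\<lambda>s. c1 / 4 * (\<delta> (s / 2))\<^sup>2)"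
    using classKinf_cmult[OF classKinf_power2[OF classKinf_compose_scale[OF \<delta>_Kinf, of "1 / 2"]],
        of "c1 / 4"] c1_pos
    by simp
  ultimately show ?thesis
    unfolding ISS_lyapunov_fun_def using C1_tv_V_alpha unif_proper_pd_V_alpha by blast
qed

end

lemma (in averaging_system) large_frequency_eventually:
  obtains \<alpha>l where "0 < \<alpha>l" "\<And>\<alpha>. \<alpha>l < \<alpha> \<Longrightarrow> large_frequency f fb Df Dfb \<delta> N \<eta>o K c1 c2 V Vt Vx \<alpha>"
proof -
  have "\<forall>\<^sub>F \<eta> in at_top. dist (\<eta> * N \<eta>) 0 < c1 / 2"
    using N_M c1_pos unfolding classM_def by (intro tendstoD) auto
  then obtain E where E: "\<And>\<eta>. E \<le> \<eta> \<Longrightarrow> \<bar>\<eta> * N \<eta>\<bar> < c1 / 2"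
    unfolding eventually_at_top_linorder by auto
  define a0 where "a0 = max (max \<eta>o (4 * c2)) (max (32 * K / c1) (max E 1))"
  show thesis
  proof (rule that[of "a0\<^sup>2"])
    show "0 < a0\<^sup>2" by (simp add: a0_def)
    fix \<alpha> assume "a0\<^sup>2 < \<alpha>"
    then have a: "a0 < sqrt \<alpha>" "0 < \<alpha>"
      using real_less_rsqrt[of a0 \<alpha>] by (auto simp: a0_def intro: le_less_trans[OF zero_le_power2])
    then have "\<eta>o \<le> sqrt \<alpha>" "4 * c2 \<le> sqrt \<alpha>" "32 * K / c1 \<le> sqrt \<alpha>" "E \<le> sqrt \<alpha>"
      by (auto simp: a0_def)
    moreover from this(3) have "32 * K \<le> c1 * sqrt \<alpha>"
      using c1_pos by (simp add: field_simps)
    moreover from E[OF \<open>E \<le> sqrt \<alpha>\<close>] have "sqrt \<alpha> * \<bar>N (sqrt \<alpha>)\<bar> \<le> c1 / 2"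
      using a by (simp add: abs_mult)
    ultimately show "large_frequency f fb Df Dfb \<delta> N \<eta>o K c1 c2 V Vt Vx \<alpha>"
      using a by unfold_locales auto
  qed
qed

theorem theorem2:
  fixes f :: "'a::euclidean_space \<Rightarrow> real \<Rightarrow> real \<Rightarrow> 'a"
    and fb :: "'a \<Rightarrow> real \<Rightarrow> 'a"
    and Df :: "'a \<Rightarrow> real \<Rightarrow> real \<Rightarrow> 'a \<Rightarrow>\<^sub>L 'a"
    and Dfb :: "'a \<Rightarrow> real \<Rightarrow> 'a \<Rightarrow>\<^sub>L 'a"
    and \<rho> \<delta> N :: "real \<Rightarrow> real"
    and \<eta>o K c1 c2 :: real
    and V Vt :: "'a \<Rightarrow> real \<Rightarrow> real"
    and Vx :: "'a \<Rightarrow> real \<Rightarrow> 'a"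
  \<comment> \<open>standing assumptions\<close>
  assumes f_cont_t: "\<And>x. continuous_on UNIV (\<lambda>p. f x (fst p) (snd p))"
    and f_deriv: "\<And>x t \<tau>. ((\<lambda>y. f y t \<tau>) has_derivative blinfun_apply (Df x t \<tau>)) (at x)"
    and Df_cont: "continuous_on UNIV (\<lambda>p. Df (fst p) (fst (snd p)) (snd (snd p)))"
    and fb_cont_t: "\<And>x. continuous_on UNIV (fb x)"
    and fb_deriv: "\<And>x t. ((\<lambda>y. fb y t) has_derivative blinfun_apply (Dfb x t)) (at x)"
    and Dfb_cont: "continuous_on UNIV (\<lambda>p. Dfb (fst p) (snd p))"
    and f_zero: "\<And>t \<alpha>. \<alpha> > 0 \<Longrightarrow> f 0 t (\<alpha> * t) = 0"
    and fb_zero: "\<And>t. fb 0 t = 0"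
    and fc_bar: "forward_complete fb"
    and fc_alpha: "\<And>\<alpha>. \<alpha> > 0 \<Longrightarrow> forward_complete (\<lambda>x t. f x t (\<alpha> * t))"
    and fc_input: "\<And>\<alpha> u. \<alpha> > 0 \<Longrightarrow> continuous_on UNIV u \<Longrightarrow>
                     forward_complete (\<lambda>x t. f x t (\<alpha> * t) + u t)"
    and \<rho>_Kinf: "classKinf \<rho>"
    and f_rho: "\<And>x t \<alpha>. \<alpha> > 0 \<Longrightarrow> norm (f x t (\<alpha> * t)) \<le> \<rho> (norm x)"
  \<comment> \<open>hypotheses of the theorem\<close>
    and \<delta>_K: "classK \<delta>"
    and ugas: "UGAS fb"
    and compat: "delta_compatible fb \<delta>"
    and \<eta>o_pos: "\<eta>o > 0" and K_gt: "K > 1" and N_M: "classM N"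
    and avg: "\<And>\<eta> x r. \<eta> \<ge> \<eta>o \<Longrightarrow>
       norm (integral {r - 1/\<eta> .. r + 1/\<eta>} (\<lambda>l. f x l (\<eta>\<^sup>2 * l) - fb x l)) \<le> \<delta> (norm x / 2) * N \<eta>"
    and Dfb_bound: "\<And>x t. norm (Dfb x t) \<le> K"
    and Df_bound: "\<And>x t \<alpha>. \<alpha> > 0 \<Longrightarrow> norm (Df x t (\<alpha> * t)) \<le> K"
    and f_bound: "\<And>x t \<alpha>. \<alpha> > 0 \<Longrightarrow> norm (f x t (\<alpha> * t)) \<le> \<delta> (norm x / 2)"
    and V_wit: "compat_witness fb \<delta> V Vx Vt c1 c2"
  shows "\<exists>\<alpha>l>0.
     (\<forall>\<alpha>>\<alpha>l. lyapunov_fun (\<lambda>\<xi> t. f \<xi> t (\<alpha> * t)) (V_alpha V f fb \<alpha>)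
              \<and> iISS_lyapunov_fun (\<lambda>\<xi> t u. f \<xi> t (\<alpha> * t) + u) (V_alpha V f fb \<alpha>))
     \<and> (classKinf \<delta> \<longrightarrow>
          (\<forall>\<alpha>>\<alpha>l. ISS_lyapunov_fun (\<lambda>\<xi> t u. f \<xi> t (\<alpha> * t) + u) (V_alpha V f fb \<alpha>)))"
proof -
  interpret averaging_system f fb Df Dfb \<delta> N \<eta>o K c1 c2 V Vt Vx
    by (rule averaging_system.intro[OF f_cont_t f_deriv Df_cont fb_cont_t fb_deriv Dfb_cont \<delta>_K
        \<eta>o_pos K_gt N_M avg Dfb_bound Df_bound f_bound V_wit])
  obtain \<alpha>l where "0 < \<alpha>l" and large: "\<And>\<alpha>. \<alpha>l < \<alpha> \<Longrightarrow> large_frequency f fb Df Dfb \<delta> N \<eta>o K c1 c2 V Vt Vx \<alpha>"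
    using large_frequency_eventually by blast
  then show ?thesis
    using large_frequency.lyapunov_fun_V_alpha[OF large] large_frequency.iISS_lyapunov_fun_V_alpha[OF large]
      large_frequency.ISS_lyapunov_fun_V_alpha[OF large]
    by blast
qed

end
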